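(* For every integer $r\geq1$, $$\sum_{i=1}^{r-1}\frac{(uv)^{2r-2i}-1}{(uv)^2-1}\,e_{2i}\,g_{2i,2r+1}=\frac{((uv)^{2r}-1)((uv)^{2r^2-r-1}-1)}{((uv)^2-1)(uv-1)}.$$
   Context: $e_{2i}=e_{2i}(u,v)$ is the Hodge–Deligne polynomial of the variety of nondegenerate skew forms on $\mathbb{C}^{2i}$ up to scaling; $g_{k,n}=g_{k,n}(u,v)$ is the Hodge–Deligne polynomial of the Grassmannian $G(k,n)$. An empty sum is $0$. *)

theory Defs
  imports Complex_Main
begin

(* It equals the point count of G(k,n) over F_q, and the Hodge-Deligne
   polynomial of G(k,n) is this polynomial evaluated at q = uv. *)
fun gauss_binom :: "nat \<Rightarrow> nat \<Rightarrow> 'a::comm_ring_1 \<Rightarrow> 'a" where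
  "gauss_binom 0 n q = 1"
| "gauss_binom (Suc k) 0 q = 0"
| "gauss_binom (Suc k) (Suc n) q = gauss_binom k n q + q ^ Suc k * gauss_binom (Suc k) n q"

definition hd_grass :: "nat \<Rightarrow> nat \<Rightarrow> complex \<Rightarrow> complex \<Rightarrow> complex" where
  "hd_grass k n u v = gauss_binom k n (u * v)"

(* e_{2i}(u,v): Hodge-Deligne polynomial of the variety of nondegenerate skew forms on
   C^{2i} up to scaling, i.e. of GL_{2i}/(Sp_{2i} * C^* ).  With q = uv it equals
   |GL_{2i}(F_q)| / (|Sp_{2i}(F_q)| (q-1)) = q^{i(i-1)} * prod_{j=2..i} (q^{2j-1} - 1).
   The argument m is the dimension 2i (used only for even m). *)
definition hd_skew :: "nat \<Rightarrow> complex \<Rightarrow> complex \<Rightarrow> complex" where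
  "hd_skew m u v = (let i = m div 2; q = u * v in
      q ^ (i * (i - 1)) * (\<Prod>j = 2..i. q ^ (2 * j - 1) - 1))"

end

theory Submission
  imports Defs "HOL-Computational_Algebra.Polynomial"
begin

(*
  Over F_q, an alternating form of rank 2i on F_q^n is a radical of codimension 2i together
  with a nondegenerate form on the quotient; there are skew_rank_count q n i of them, and
  (q - 1) e_{2i} g_{2i,n} is this count at q = uv.  Two sums over all alternating forms have
  closed forms: their number q^(n choose 2), and the total size of their radicals.  For
  n = 2r + 1, the sum in the theorem times (q^2 - 1)(q - 1) is a combination of these two.
  Both follow from the recurrence in n of skew_rank_count, a consequence of the q-Pascal rule
  and the absorption identity for Gaussian binomials.
*)

lemma gauss_binom_eq_0: "n < k \<Longrightarrow> gauss_binom k n q = 0"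
  by (induction k n q rule: gauss_binom.induct) auto

lemma gauss_binom_absorb:
  "(q ^ Suc k - 1) * gauss_binom (Suc k) n q = (q ^ (n - k) - 1) * gauss_binom k n q"
proof (induction n arbitrary: k)
  case 0
  then show ?case by simp
next
  case (Suc n)
  show ?case
  proof (cases k)
    case 0
    then show ?thesis using Suc.IH[of 0] by (simp add: algebra_simps)
  next
    case (Suc j)
    show ?thesis
    proof (cases "j < n")
      case True
      define m where "m = n - Suc j"
      have "n - Suc j = m" "n - j = Suc m" using True by (simp_all add: m_def)
      let ?B = "gauss_binom (Suc j) n q"
      have "(q ^ Suc (Suc j) - 1) * gauss_binom (Suc (Suc j)) (Suc n) q
          = (q ^ Suc (Suc j) - 1) * ?B + q ^ Suc (Suc j) * ((q ^ m - 1) * ?B)"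
        using Suc.IH[of "Suc j"] by (simp add: \<open>n - Suc j = m\<close> algebra_simps)
      also have "\<dots> = (q ^ Suc (Suc j) * q ^ m - 1) * ?B"
        by (simp add: algebra_simps)
      also have "\<dots> = (q ^ Suc j * q ^ Suc m - 1) * ?B"
        by (simp add: mult_ac)
      also have "\<dots> = (q ^ Suc j - 1) * ?B + q ^ Suc j * ((q ^ Suc m - 1) * ?B)"
        by (simp add: algebra_simps)
      also have "\<dots> = (q ^ Suc m - 1) * gauss_binom j n q + q ^ Suc j * ((q ^ Suc m - 1) * ?B)"
        using Suc.IH[of j] by (simp add: \<open>n - j = Suc m\<close>)
      also have "\<dots> = (q ^ (Suc n - Suc j) - 1) * gauss_binom (Suc j) (Suc n) q"
        by (simp add: \<open>n - j = Suc m\<close> algebra_simps)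
      finally show ?thesis unfolding Suc .
    next
      case False
      then show ?thesis unfolding Suc by (simp add: gauss_binom_eq_0)
    qed
  qed
qed

lemma poly_gauss_binom: "poly (gauss_binom k n p) x = gauss_binom k n (poly p x)"
  by (induction k n p rule: gauss_binom.induct) simp_all

lemma gauss_binom_power_diff:
  "q ^ k * (q ^ (n - k) - 1) * gauss_binom k n q = (q ^ n - q ^ k) * gauss_binom k n q"
proof (cases "k \<le> n")
  case True
  then show ?thesis by (simp add: algebra_simps flip: power_add)
qed (simp add: gauss_binom_eq_0)

(* The number |GL_2i(F_q)| / |Sp_2i(F_q)| of nondegenerate alternating forms on F_q^(2i) *)
definition nondeg_skew_count :: "'a::comm_ring_1 \<Rightarrow> nat \<Rightarrow> 'a" where
  "nondeg_skew_count q i = q ^ (i * (i - 1)) * (\<Prod>j = 1..i. q ^ (2 * j - 1) - 1)"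

definition skew_rank_count :: "'a::comm_ring_1 \<Rightarrow> nat \<Rightarrow> nat \<Rightarrow> 'a" where
  "skew_rank_count q n i = nondeg_skew_count q i * gauss_binom (2 * i) n q"

lemma nondeg_skew_count_Suc:
  "nondeg_skew_count q (Suc i) = q ^ (2 * i) * (q ^ Suc (2 * i) - 1) * nondeg_skew_count q i"
proof -
  have "Suc i * (Suc i - 1) = 2 * i + i * (i - 1)" by (cases i) auto
  moreover have "(\<Prod>j = 1..Suc i. q ^ (2 * j - 1) - 1)
      = (q ^ Suc (2 * i) - 1) * (\<Prod>j = 1..i. q ^ (2 * j - 1) - 1)"
    by simp
  ultimately show ?thesis by (simp only: nondeg_skew_count_def power_add mult_ac)
qed

lemma skew_rank_count_0 [simp]: "skew_rank_count q n 0 = 1"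
  by (simp add: skew_rank_count_def nondeg_skew_count_def)

lemma skew_rank_count_eq_0: "n < 2 * i \<Longrightarrow> skew_rank_count q n i = 0"
  by (simp add: skew_rank_count_def gauss_binom_eq_0)

lemma skew_rank_count_Suc_Suc:
  "skew_rank_count q (Suc n) (Suc i)
     = q ^ (2 * Suc i) * skew_rank_count q n (Suc i)
       + (q ^ n - q ^ (2 * i)) * skew_rank_count q n i"
proof -
  have "nondeg_skew_count q (Suc i) * gauss_binom (Suc (2 * i)) n q
      = nondeg_skew_count q i
        * (q ^ (2 * i) * ((q ^ Suc (2 * i) - 1) * gauss_binom (Suc (2 * i)) n q))"
    by (simp add: nondeg_skew_count_Suc mult_ac)
  also have "\<dots>
      = nondeg_skew_count q i * (q ^ (2 * i) * (q ^ (n - 2 * i) - 1) * gauss_binom (2 * i) n q)"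
    by (subst gauss_binom_absorb) (simp add: mult_ac)
  also have "\<dots> = (q ^ n - q ^ (2 * i)) * skew_rank_count q n i"
    by (simp add: gauss_binom_power_diff skew_rank_count_def)
  finally show ?thesis
    by (simp add: skew_rank_count_def algebra_simps)
qed

lemma poly_skew_rank_count: "poly (skew_rank_count p n i) x = skew_rank_count (poly p x) n i"
  by (simp add: skew_rank_count_def nondeg_skew_count_def poly_prod poly_gauss_binom)

lemma sum_skew_rank_count_shift:
  "(\<Sum>i\<le>n. f (Suc i) * skew_rank_count q n (Suc i))
     = (\<Sum>i\<le>n. f i * skew_rank_count q n i) - f 0"
proof -
  have "(\<Sum>i\<le>Suc n. f i * skew_rank_count q n i)
      = f 0 + (\<Sum>i\<le>n. f (Suc i) * skew_rank_count q n (Suc i))"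
    by (subst sum.atMost_Suc_shift) simp
  then show ?thesis by (simp add: skew_rank_count_eq_0)
qed

lemma sum_skew_rank_count: "(\<Sum>i\<le>n. skew_rank_count q n i) = q ^ (n choose 2)"
proof (induction n)
  case 0
  then show ?case by (simp add: binomial_eq_0)
next
  case (Suc n)
  have "(\<Sum>i\<le>Suc n. skew_rank_count q (Suc n) i)
      = 1 + (\<Sum>i\<le>n. skew_rank_count q (Suc n) (Suc i))"
    by (subst sum.atMost_Suc_shift) simp
  also have "\<dots> = 1 + (\<Sum>i\<le>n. q ^ (2 * Suc i) * skew_rank_count q n (Suc i))
      + q ^ n * (\<Sum>i\<le>n. skew_rank_count q n i) - (\<Sum>i\<le>n. q ^ (2 * i) * skew_rank_count q n i)"
    by (simp add: skew_rank_count_Suc_Suc sum.distrib sum_subtractf sum_distrib_left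
        left_diff_distrib)
  also have "\<dots> = q ^ n * q ^ (n choose 2)"
    using sum_skew_rank_count_shift[of "\<lambda>i. q ^ (2 * i)"] Suc.IH by simp
  also have "\<dots> = q ^ (Suc n choose 2)"
    by (simp add: numeral_2_eq_2 power_add)
  finally show ?case .
qed

(* q^n times the total size q^(n - 2i) of the radicals of all alternating forms on F_q^n *)
definition weighted_skew_count :: "'a::comm_ring_1 \<Rightarrow> nat \<Rightarrow> 'a" where
  "weighted_skew_count q n = (\<Sum>i\<le>n. q ^ (2 * (n - i)) * skew_rank_count q n i)"

lemma weighted_skew_count_Suc:
  "weighted_skew_count q (Suc n)
     = (q ^ (2 * Suc n) - q ^ (2 * n)) * q ^ (n choose 2) + q ^ n * weighted_skew_count q n"
proof -
  have summand: "q ^ (2 * (n - i)) * skew_rank_count q (Suc n) (Suc i)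
      = q ^ (2 * Suc n) * skew_rank_count q n (Suc i)
        + q ^ n * (q ^ (2 * (n - i)) * skew_rank_count q n i) - q ^ (2 * n) * skew_rank_count q n i"
    if "i \<le> n" for i
  proof -
    have "2 * (n - i) + 2 * Suc i = 2 * Suc n" "2 * (n - i) + 2 * i = 2 * n"
      using that by simp_all
    then have "q ^ (2 * (n - i)) * q ^ (2 * Suc i) = q ^ (2 * Suc n)"
      "q ^ (2 * (n - i)) * q ^ (2 * i) = q ^ (2 * n)"
      by (metis power_add)+
    then show ?thesis by (simp add: skew_rank_count_Suc_Suc algebra_simps)
  qed
  have "weighted_skew_count q (Suc n)
      = q ^ (2 * Suc n) + (\<Sum>i\<le>n. q ^ (2 * (n - i)) * skew_rank_count q (Suc n) (Suc i))"
    unfolding weighted_skew_count_def by (subst sum.atMost_Suc_shift) simp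
  also have "\<dots> = q ^ (2 * Suc n) + (\<Sum>i\<le>n. q ^ (2 * Suc n) * skew_rank_count q n (Suc i))
      + q ^ n * weighted_skew_count q n - q ^ (2 * n) * (\<Sum>i\<le>n. skew_rank_count q n i)"
    by (simp add: summand weighted_skew_count_def sum.distrib sum_subtractf sum_distrib_left)
  also have "\<dots>
      = (q ^ (2 * Suc n) - q ^ (2 * n)) * q ^ (n choose 2) + q ^ n * weighted_skew_count q n"
    using sum_skew_rank_count_shift[where f = "\<lambda>_. q ^ (2 * Suc n)"]
    by (simp add: sum_skew_rank_count flip: sum_distrib_left) (simp add: algebra_simps)
  finally show ?thesis .
qed

lemma weighted_skew_count_Suc_closed:
  "weighted_skew_count q (Suc n) = q ^ Suc n * q ^ (n choose 2) * (q ^ n + q ^ Suc n - 1)"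
proof (induction n)
  case 0
  then show ?case
    by (simp add: weighted_skew_count_Suc weighted_skew_count_def binomial_eq_0
        skew_rank_count_eq_0 power2_eq_square)
next
  case (Suc n)
  have "Suc n choose 2 = n + (n choose 2)" by (simp add: numeral_2_eq_2)
  then show ?case
    unfolding weighted_skew_count_Suc[of q "Suc n"] Suc.IH
    by (simp add: power_add mult_2_right algebra_simps)
qed

lemma choose_two_double: "1 \<le> r \<Longrightarrow> 2 * r choose 2 = Suc (2 * r\<^sup>2 - r - 1)"
  by (cases r) (auto simp: choose_two power2_eq_square algebra_simps)

lemma sum_skew_rank_count_odd_mult:
  assumes "1 \<le> r"
  shows "q ^ (2 * r + 2)
           * (\<Sum>i\<le>2 * r + 1. (q ^ (2 * (r - i)) - 1) * skew_rank_count q (2 * r + 1) i)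
       = q ^ (2 * r + 2) * ((q ^ (2 * r) - 1) * q ^ (2 * r\<^sup>2 - r - 1))"
proof -
  define n where "n = 2 * r + 1"
  have summand: "q ^ (2 * r + 2) * ((q ^ (2 * (r - i)) - 1) * skew_rank_count q n i)
      = q ^ (2 * (n - i)) * skew_rank_count q n i - q ^ (2 * r + 2) * skew_rank_count q n i" for i
  proof (cases "i \<le> r")
    case True
    then have "2 * r + 2 + 2 * (r - i) = 2 * (n - i)" by (simp add: n_def)
    then have "q ^ (2 * r + 2) * q ^ (2 * (r - i)) = q ^ (2 * (n - i))" by (metis power_add)
    then show ?thesis by (simp add: algebra_simps)
  next
    case False
    then show ?thesis by (simp add: n_def skew_rank_count_eq_0)
  qed
  have "q ^ (2 * r + 2) * (\<Sum>i\<le>n. (q ^ (2 * (r - i)) - 1) * skew_rank_count q n i)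
      = (\<Sum>i\<le>n. q ^ (2 * (n - i)) * skew_rank_count q n i
                 - q ^ (2 * r + 2) * skew_rank_count q n i)"
    by (simp only: sum_distrib_left summand)
  also have "\<dots>
      = weighted_skew_count q (Suc (2 * r)) - q ^ (2 * r + 2) * q ^ (Suc (2 * r) choose 2)"
    unfolding sum_subtractf weighted_skew_count_def sum_distrib_left[symmetric] sum_skew_rank_count
    by (simp add: n_def)
  also have "\<dots> = q ^ (2 * r + 2) * ((q ^ (2 * r) - 1) * q ^ (2 * r\<^sup>2 - r - 1))"
  proof -
    define e where "e = 2 * r\<^sup>2 - r - 1"
    have "2 * r choose 2 = Suc e" using choose_two_double[OF assms] by (simp add: e_def)
    moreover have "Suc (2 * r) choose 2 = 2 * r + (2 * r choose 2)" by (simp add: numeral_2_eq_2)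
    ultimately show ?thesis
      unfolding weighted_skew_count_Suc_closed e_def[symmetric] by (simp add: power_add algebra_simps)
  qed
  finally show ?thesis by (simp add: n_def)
qed

lemma sum_skew_rank_count_odd:
  fixes q :: "'a::idom"
  assumes "1 \<le> r"
  shows "(\<Sum>i\<le>2 * r + 1. (q ^ (2 * (r - i)) - 1) * skew_rank_count q (2 * r + 1) i)
       = (q ^ (2 * r) - 1) * q ^ (2 * r\<^sup>2 - r - 1)"
proof -
  \<comment> \<open>cancelling \<open>X ^ (2 * r + 2)\<close> in the polynomial ring also covers \<open>q = 0\<close>\<close>
  let ?X = "[:0, 1:] :: 'a poly"
  have "(\<Sum>i\<le>2 * r + 1. (?X ^ (2 * (r - i)) - 1) * skew_rank_count ?X (2 * r + 1) i)
      = (?X ^ (2 * r) - 1) * ?X ^ (2 * r\<^sup>2 - r - 1)"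
    using sum_skew_rank_count_odd_mult[OF assms, of ?X] by simp
  from arg_cong[where f = "\<lambda>p. poly p q", OF this] show ?thesis
    by (simp add: poly_sum poly_skew_rank_count)
qed

lemma sum_skew_rank_count_odd_positive:
  fixes q :: "'a::idom"
  assumes "1 \<le> r"
  shows "(\<Sum>i = 1..r - 1. (q ^ (2 * (r - i)) - 1) * skew_rank_count q (2 * r + 1) i)
       = (q ^ (2 * r) - 1) * (q ^ (2 * r\<^sup>2 - r - 1) - 1)"
proof -
  define f where "f i = (q ^ (2 * (r - i)) - 1) * skew_rank_count q (2 * r + 1) i" for i
  have "(q ^ (2 * r) - 1) * q ^ (2 * r\<^sup>2 - r - 1) = (\<Sum>i\<le>2 * r + 1. f i)"
    using sum_skew_rank_count_odd[OF assms, of q] by (simp add: f_def)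
  also have "\<dots> = (\<Sum>i\<in>insert 0 {1..r - 1}. f i)"
  proof (rule sum.mono_neutral_right)
    show "\<forall>i\<in>{..2 * r + 1} - insert 0 {1..r - 1}. f i = 0"
      using assms by (auto simp: f_def skew_rank_count_eq_0 not_le)
  qed auto
  also have "\<dots> = (q ^ (2 * r) - 1) + (\<Sum>i = 1..r - 1. f i)"
    by (simp add: f_def)
  finally show ?thesis
    unfolding f_def[symmetric] by (simp add: right_diff_distrib eq_diff_eq')
qed

lemma nondeg_skew_count_hd_skew:
  assumes "1 \<le> i"
  shows "nondeg_skew_count (u * v) i = (u * v - 1) * hd_skew (2 * i) u v"
proof -
  have "{1..i} = insert 1 {2..i}" using assms by auto
  then show ?thesis by (simp add: nondeg_skew_count_def hd_skew_def Let_def mult_ac)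
qed

theorem proposition4p5:
  fixes u v :: complex and r :: nat
  assumes "r \<ge> 1"
    and "(u * v)\<^sup>2 \<noteq> 1"
  shows "(\<Sum>i = 1..r - 1. ((u * v) ^ (2 * r - 2 * i) - 1) / ((u * v)\<^sup>2 - 1)
            * hd_skew (2 * i) u v * hd_grass (2 * i) (2 * r + 1) u v)
         = (((u * v) ^ (2 * r) - 1) * ((u * v) ^ (2 * r\<^sup>2 - r - 1) - 1))
           / (((u * v)\<^sup>2 - 1) * (u * v - 1))"
proof -
  let ?q = "u * v"
  have "?q - 1 \<noteq> 0"
    using assms(2) by auto
  have summand: "(?q ^ (2 * r - 2 * i) - 1) / (?q\<^sup>2 - 1)
        * hd_skew (2 * i) u v * hd_grass (2 * i) (2 * r + 1) u v
      = (?q ^ (2 * (r - i)) - 1) * skew_rank_count ?q (2 * r + 1) i / ((?q\<^sup>2 - 1) * (?q - 1))"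
    if "i \<in> {1..r - 1}" for i
  proof -
    have "skew_rank_count ?q (2 * r + 1) i
        = (?q - 1) * (hd_skew (2 * i) u v * hd_grass (2 * i) (2 * r + 1) u v)"
      using that by (simp add: skew_rank_count_def nondeg_skew_count_hd_skew hd_grass_def mult_ac)
    moreover have "2 * r - 2 * i = 2 * (r - i)" by simp
    ultimately show ?thesis
      using \<open>?q - 1 \<noteq> 0\<close> by (simp del: power_mult_distrib)
  qed
  have "(\<Sum>i = 1..r - 1. (?q ^ (2 * r - 2 * i) - 1) / (?q\<^sup>2 - 1)
          * hd_skew (2 * i) u v * hd_grass (2 * i) (2 * r + 1) u v)
      = (\<Sum>i = 1..r - 1. (?q ^ (2 * (r - i)) - 1) * skew_rank_count ?q (2 * r + 1) i)
        / ((?q\<^sup>2 - 1) * (?q - 1))"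
    unfolding sum_divide_distrib by (rule sum.cong[OF refl summand])
  then show ?thesis
    unfolding sum_skew_rank_count_odd_positive[OF assms(1)] .
qed

end
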